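(* Let $q\in\mathbb{C}$ with $|q|<1$, $r\in\mathbb{N}$, $n\in\mathbb{Z}_{+}=\{0,1,2,\dots\}$, $x$ real with $x\neq0,-1,-2,\dots$, and let $f\in\mathbb{N}$ be odd. Then $$E_{n,q}^{(r)}(x)=\left(\frac{[2]_q}{[2]_{q^f}}\right)^r[f]_q^n\sum_{a_1,\dots,a_r=0}^{f-1}(-1)^{a_1+\cdots+a_r}E_{n,q^f}^{(r)}\!\left(\frac{a_1+\cdots+a_r+x}{f}\right),$$ and moreover $$E_{n,q}^{(r)}(x)=\frac{[2]_q^r}{(1-q)^n}\sum_{l=0}^{n}\binom{n}{l}(-q^x)^l\sum_{a_1,\dots,a_r=0}^{f-1}\frac{(-1)^{a_1+\cdots+a_r}q^{l(a_1+\cdots+a_r)}}{(1+q^{lf})^r}.$$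
   Context: For a complex number $q$ with $|q|<1$ and $x$ real, $[x]_q=\frac{1-q^x}{1-q}$ (so $[2]_q=1+q$, $[2]_{q^f}=1+q^f$, $[f]_q=\frac{1-q^f}{1-q}$). For $r\in\mathbb{N}$, the $q$-Euler polynomials of order $r$ are defined by the generating function $$[2]_q^r\sum_{m_1,\dots,m_r=0}^{\infty}(-1)^{m_1+\cdots+m_r}e^{[m_1+\cdots+m_r+x]_q t}=\sum_{n=0}^{\infty}E_{n,q}^{(r)}(x)\frac{t^n}{n!},$$ and $E_{n,q^f}^{(r)}$ denotes the same with $q$ replaced by $q^f$. *)

theory Defs
  imports "HOL-Analysis.Analysis"
begin

text \<open>A q-parameter is represented by its real-power function P, with P y standing for q^y.
  For the base q we use P y = q powr y (principal branch); for the base q^f we use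
  P y = q powr (f * y), i.e. (q^f)^y is read as q^(f y).\<close>

definition qpow :: "complex \<Rightarrow> real \<Rightarrow> complex" where
  "qpow q y = q powr (complex_of_real y)"

definition qnum :: "(real \<Rightarrow> complex) \<Rightarrow> real \<Rightarrow> complex" where
  "qnum P y = (1 - P y) / (1 - P 1)"

text \<open>Coefficient of t^n/n! in the (formal) generating function
  [2]^r \<Sum>_{m_1..m_r} (-1)^(m_1+..+m_r) e^([m_1+..+m_r+x] t), i.e.
  [2]^r \<Sum>_m (-1)^|m| [|m|+x]^n, where the divergent alternating sum is taken in the
  Abel sense (limit s -> 1- of the sum weighted by s^|m|).\<close>
definition qEuler :: "(real \<Rightarrow> complex) \<Rightarrow> nat \<Rightarrow> nat \<Rightarrow> real \<Rightarrow> complex" where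
  "qEuler P r n x = (1 + P 1) ^ r *
     Lim (at_left (1::real))
       (\<lambda>s. infsum (\<lambda>ms. (-1) ^ sum_list ms * complex_of_real s ^ sum_list ms
                         * (qnum P (real (sum_list ms) + x)) ^ n)
              {ms :: nat list. length ms = r})"

end

theory Submission
  imports Defs
begin

text \<open>Since q^(m+x) = q^m q^x, the binomial theorem writes [m+x]^n, where m = m_1+...+m_r, as
  (1-q)^(-n) \<Sum>_l (n choose l) (-q^x)^l (q^l)^m. Summed over all r-tuples with Abel weight
  (-s)^m, each term is a product of r geometric series, so before letting s \<rightarrow> 1
  the generating sum equals (1-q)^(-n) \<Sum>_l (n choose l) (-q^x)^l (1 + s q^l)^(-r), which is
  continuous at s = 1. This yields the closed form
  E = [2]^r (1-q)^(-n) \<Sum>_l (n choose l) (-q^x)^l / (1+q^l)^r, and both identities reduce to it: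
  for odd f the finite alternating sums give \<Sum>_{a<f} (-q^l)^a = (1+q^(lf)) / (1+q^l), and the
  q^f-polynomial at (a+x)/f has the same closed form with q^x replaced by q^a q^x.\<close>

lemma has_sum_sum:
  fixes f :: "'i \<Rightarrow> 'a \<Rightarrow> 'b::topological_comm_monoid_add"
  assumes "finite I" and "\<And>i. i \<in> I \<Longrightarrow> (f i has_sum s i) A"
  shows "((\<lambda>a. \<Sum>i\<in>I. f i a) has_sum (\<Sum>i\<in>I. s i)) A"
  using assms by (induction I rule: finite_induct) (auto intro: has_sum_add)

lemma summable_on_norm_times:
  fixes g :: "'a \<Rightarrow> 'c::{real_normed_div_algebra, banach}" and h :: "'b \<Rightarrow> 'c"
  assumes g: "(\<lambda>x. norm (g x)) summable_on A" and h: "(\<lambda>y. norm (h y)) summable_on B"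
  shows "(\<lambda>(x, y). norm (g x * h y)) summable_on A \<times> B"
proof -
  have "(\<lambda>x. norm (g x) * infsum (\<lambda>y. norm (h y)) B) summable_on A"
    using g by (rule summable_on_cmult_left)
  moreover have "(\<lambda>y. norm (g x * h y)) summable_on B" for x
    using summable_on_cmult_right[OF h, of "norm (g x)"] by (simp add: norm_mult)
  moreover have "infsum (\<lambda>y. norm (g x * h y)) B = norm (g x) * infsum (\<lambda>y. norm (h y)) B" for x
    by (simp add: norm_mult infsum_cmult_right')
  ultimately have "Infinite_Sum.abs_summable_on (\<lambda>(x, y). g x * h y) (A \<times> B)"
    by (subst Infinite_Sum.abs_summable_on_Sigma_iff) (simp add: infsum_nonneg)
  then show ?thesis
    by (simp add: case_prod_unfold)
qed

lemma has_sum_times: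
  fixes g :: "'a \<Rightarrow> 'c::{real_normed_div_algebra, banach}" and h :: "'b \<Rightarrow> 'c"
  assumes g: "(\<lambda>x. norm (g x)) summable_on A" and h: "(\<lambda>y. norm (h y)) summable_on B"
  shows "((\<lambda>(x, y). g x * h y) has_sum infsum g A * infsum h B) (A \<times> B)"
proof -
  have inner: "((\<lambda>y. g x * h y) has_sum g x * infsum h B) B" for x
    using abs_summable_summable[OF h] by (intro has_sum_cmult_right has_sum_infsum)
  have outer: "((\<lambda>x. g x * infsum h B) has_sum infsum g A * infsum h B) A"
    using abs_summable_summable[OF g] by (intro has_sum_cmult_left has_sum_infsum)
  have summable: "(\<lambda>(x, y). g x * h y) summable_on A \<times> B"
    using summable_on_norm_times[OF g h] by (simp add: abs_summable_summable case_prod_unfold)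
  show ?thesis
    by (rule has_sum_SigmaI[OF _ outer summable]) (simp add: inner)
qed

lemma has_sum_lists_Cons_iff:
  "((\<lambda>(m, ms). h (m # ms)) has_sum s) (A \<times> {ms. length ms = r \<and> set ms \<subseteq> A})
   \<longleftrightarrow> (h has_sum s) {ms. length ms = Suc r \<and> set ms \<subseteq> A}"
  by (rule has_sum_reindex_bij_witness[of _ "\<lambda>ms. (hd ms, tl ms)" "\<lambda>(m, ms). m # ms"])
     (auto simp: length_Suc_conv)

lemma
  fixes g :: "'b \<Rightarrow> 'a::{real_normed_div_algebra, banach}"
  assumes g: "(\<lambda>m. norm (g m)) summable_on A"
  shows summable_on_norm_prod_list_lists:
      "(\<lambda>ms. norm (prod_list (map g ms))) summable_on {ms. length ms = r \<and> set ms \<subseteq> A}"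
    and has_sum_prod_list_lists:
      "((\<lambda>ms. prod_list (map g ms)) has_sum infsum g A ^ r) {ms. length ms = r \<and> set ms \<subseteq> A}"
proof (induction r)
  case 0
  have "{ms. length ms = 0 \<and> set ms \<subseteq> A} = {[]}"
    by auto
  then show "(\<lambda>ms. norm (prod_list (map g ms))) summable_on {ms. length ms = 0 \<and> set ms \<subseteq> A}"
    and "((\<lambda>ms. prod_list (map g ms)) has_sum infsum g A ^ 0) {ms. length ms = 0 \<and> set ms \<subseteq> A}"
    by (simp_all add: has_sum_finite_iff)
next
  case (Suc r)
  let ?L = "{ms. length ms = r \<and> set ms \<subseteq> A}"
  have IH: "(\<lambda>ms. norm (prod_list (map g ms))) summable_on ?L"
    "infsum (\<lambda>ms. prod_list (map g ms)) ?L = infsum g A ^ r"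
    using Suc.IH by (auto dest: infsumI)
  have "(\<lambda>(m, ms). norm (prod_list (map g (m # ms)))) summable_on A \<times> ?L"
    using summable_on_norm_times[OF g IH(1)] by (simp add: case_prod_unfold)
  then show "(\<lambda>ms. norm (prod_list (map g ms))) summable_on {ms. length ms = Suc r \<and> set ms \<subseteq> A}"
    using has_sum_lists_Cons_iff[of "\<lambda>ms. norm (prod_list (map g ms))"] by (auto simp: summable_on_def)
  show "((\<lambda>ms. prod_list (map g ms)) has_sum infsum g A ^ Suc r) {ms. length ms = Suc r \<and> set ms \<subseteq> A}"
    using has_sum_times[OF g IH(1)] IH(2)
    by (simp add: has_sum_lists_Cons_iff[symmetric] case_prod_unfold)
qed

lemma power_sum_list: "c ^ sum_list ms = prod_list (map ((^) c) ms)"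
  by (induction ms) (simp_all add: power_add)

lemma has_sum_power_sum_list_lists:
  fixes c :: "'a::{real_normed_field, banach}"
  assumes "norm c < 1"
  shows "((\<lambda>ms. c ^ sum_list ms) has_sum (1 / (1 - c)) ^ r) {ms :: nat list. length ms = r}"
proof -
  have "((\<lambda>m. norm c ^ m) has_sum 1 / (1 - norm c)) UNIV"
    using assms by (intro norm_summable_imp_has_sum summable_geometric geometric_sums) auto
  then have norm_summable: "(\<lambda>m. norm (c ^ m)) summable_on UNIV"
    by (auto simp: norm_power summable_on_def)
  have "((\<lambda>m. c ^ m) has_sum 1 / (1 - c)) UNIV"
    using assms by (intro norm_summable_imp_has_sum geometric_sums) (auto simp: norm_power intro: summable_geometric)
  then show ?thesis
    using has_sum_prod_list_lists[OF norm_summable, of r] by (simp add: power_sum_list infsumI)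
qed

lemma sum_power_sum_list_lists:
  fixes c :: "'a::{real_normed_field, banach}"
  assumes "finite A"
  shows "(\<Sum>ms \<in> {ms. length ms = r \<and> set ms \<subseteq> A}. c ^ sum_list ms) = (\<Sum>a\<in>A. c ^ a) ^ r"
proof -
  have "finite {ms. length ms = r \<and> set ms \<subseteq> A}"
    using finite_lists_length_eq[OF assms, of r] by (simp add: conj_commute)
  then show ?thesis
    using has_sum_prod_list_lists[of "(^) c" A r] assms
    by (simp add: power_sum_list has_sum_finite_iff)
qed

lemma sum_alternating_power_sum_list_lists:
  fixes z :: "'a::{real_normed_field, banach}"
  assumes "odd f" and "1 + z \<noteq> 0"
  shows "(\<Sum>ms \<in> {ms. length ms = r \<and> set ms \<subseteq> {..<f}}. (- z) ^ sum_list ms)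
         = ((1 + z ^ f) / (1 + z)) ^ r"
proof -
  have "- z \<noteq> 1"
    using assms(2) by (metis add.inverse_inverse diff_minus_eq_add diff_self)
  then have "(\<Sum>a<f. (- z) ^ a) = (1 + z ^ f) / (1 + z)"
    using assms(1) by (simp add: sum_gp_strict power_minus_odd)
  then show ?thesis
    by (simp add: sum_power_sum_list_lists)
qed

lemma one_plus_power_neq_zero:
  fixes z :: "'a::real_normed_div_algebra"
  assumes "norm z < 1"
  shows "1 + z ^ l \<noteq> 0"
proof (cases "l = 0")
  case False
  then have "norm (z ^ l) < 1"
    using assms by (simp add: norm_power power_less_one_iff)
  then have "z ^ l \<noteq> -1"
    by auto
  then show ?thesis
    by (simp add: add_eq_0_iff)
qed simp

lemma qnum_power_expansion:
  fixes P :: "real \<Rightarrow> complex"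
  assumes "P (real k + x) = P 1 ^ k * P x"
  shows "w ^ k * qnum P (real k + x) ^ n
         = (1 / (1 - P 1)) ^ n * (\<Sum>l\<le>n. of_nat (n choose l) * (- P x) ^ l * (w * P 1 ^ l) ^ k)"
proof -
  have "qnum P (real k + x) ^ n = (1 / (1 - P 1)) ^ n * (- (P 1 ^ k * P x) + 1) ^ n"
    using assms by (simp add: qnum_def power_divide)
  also have "(- (P 1 ^ k * P x) + 1) ^ n = (\<Sum>l\<le>n. of_nat (n choose l) * (- (P 1 ^ k * P x)) ^ l)"
    using binomial_ring[of "- (P 1 ^ k * P x)" 1 n] by simp
  finally have "w ^ k * qnum P (real k + x) ^ n
      = (1 / (1 - P 1)) ^ n * (\<Sum>l\<le>n. w ^ k * (of_nat (n choose l) * (- (P 1 ^ k * P x)) ^ l))"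
    by (simp add: sum_distrib_left mult.left_commute)
  moreover have "(- (P 1 ^ k * P x)) ^ l = (- P x) ^ l * (P 1 ^ k) ^ l" for l
    by (simp add: mult.commute flip: power_mult_distrib)
  ultimately show ?thesis
    by (simp add: power_mult_distrib power_mult[symmetric] algebra_simps)
qed

lemma has_sum_Abel_weighted_qnum_power:
  fixes P :: "real \<Rightarrow> complex"
  assumes shift: "\<And>m::nat. P (real m + x) = P 1 ^ m * P x"
    and norm_P1: "norm (P 1) < 1" and s: "\<bar>s\<bar> < 1"
  shows "((\<lambda>ms. (-1) ^ sum_list ms * complex_of_real s ^ sum_list ms * qnum P (real (sum_list ms) + x) ^ n)
          has_sum (1 / (1 - P 1)) ^ n *
            (\<Sum>l\<le>n. of_nat (n choose l) * (- P x) ^ l * (1 / (1 + complex_of_real s * P 1 ^ l)) ^ r))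
         {ms. length ms = r}"
proof -
  have "norm (- complex_of_real s * P 1 ^ l) < 1" for l
  proof -
    have "norm (P 1) ^ l \<le> 1"
      using norm_P1 by (simp add: power_le_one)
    then show ?thesis
      using s by (simp add: norm_mult norm_power le_less_trans[OF mult_right_le_one_le])
  qed
  then have "((\<lambda>ms. (- complex_of_real s * P 1 ^ l) ^ sum_list ms)
      has_sum (1 / (1 + complex_of_real s * P 1 ^ l)) ^ r) {ms. length ms = r}" for l
    using has_sum_power_sum_list_lists by fastforce
  then have summand: "((\<lambda>ms. of_nat (n choose l) * (- P x) ^ l * (- complex_of_real s * P 1 ^ l) ^ sum_list ms)
      has_sum of_nat (n choose l) * (- P x) ^ l * (1 / (1 + complex_of_real s * P 1 ^ l)) ^ r)
      {ms. length ms = r}" for l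
    by (rule has_sum_cmult_right)
  have "(-1) ^ k * complex_of_real s ^ k * qnum P (real k + x) ^ n
      = (1 / (1 - P 1)) ^ n * (\<Sum>l\<le>n. of_nat (n choose l) * (- P x) ^ l * (- complex_of_real s * P 1 ^ l) ^ k)" for k
    using qnum_power_expansion[of P k x "- complex_of_real s" n] shift
    by (simp add: power_minus[of "complex_of_real s"])
  then show ?thesis
    by (simp only:) (intro has_sum_cmult_right[where c = "(1 / (1 - P 1)) ^ n"] has_sum_sum finite_atMost summand)
qed

lemma qEuler_closed_form:
  fixes P :: "real \<Rightarrow> complex"
  assumes shift: "\<And>m::nat. P (real m + x) = P 1 ^ m * P x" and norm_P1: "norm (P 1) < 1"
  shows "qEuler P r n x = (1 + P 1) ^ r / (1 - P 1) ^ n *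
           (\<Sum>l\<le>n. of_nat (n choose l) * (- P x) ^ l / (1 + P 1 ^ l) ^ r)"
proof -
  define G where "G s = (1 / (1 - P 1)) ^ n *
      (\<Sum>l\<le>n. of_nat (n choose l) * (- P x) ^ l * (1 / (1 + complex_of_real s * P 1 ^ l)) ^ r)" for s
  define E where "E s = infsum (\<lambda>ms. (-1) ^ sum_list ms * complex_of_real s ^ sum_list ms
      * qnum P (real (sum_list ms) + x) ^ n) {ms. length ms = r}" for s
  have partial_sum: "E s = G s" if "0 < s" "s < 1" for s
    unfolding E_def G_def
    by (intro infsumI has_sum_Abel_weighted_qnum_power[OF shift norm_P1]) (use that in auto)
  have "eventually (\<lambda>s. E s = G s) (at_left (1::real))"
    using eventually_at_left_real[OF zero_less_one] by eventually_elim (auto intro: partial_sum)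
  moreover have "(G \<longlongrightarrow> G 1) (at_left 1)"
    unfolding G_def by (intro tendsto_intros) (auto simp: one_plus_power_neq_zero norm_P1)
  ultimately have "Lim (at_left 1) E = G 1"
    by (intro tendsto_Lim) (auto simp: trivial_limit_at_left_real tendsto_cong)
  moreover have "qEuler P r n x = (1 + P 1) ^ r * Lim (at_left 1) E"
    by (simp add: qEuler_def E_def[abs_def])
  ultimately show ?thesis
    by (simp add: G_def power_one_over divide_inverse power_inverse sum_distrib_left mult_ac)
qed

lemma qpow_add_of_nat: "qpow q (real m + y) = q ^ m * qpow q y"
  by (cases "q = 0") (simp_all add: qpow_def powr_add powr_nat)

text \<open>The restriction 0 < m is needed because 0 powr 0 = 0.\<close>

lemma qpow_of_nat: "0 < m \<Longrightarrow> qpow q (real m) = q ^ m"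
  by (simp add: qpow_def powr_nat)

lemma qEuler_qpow:
  assumes "norm q < 1"
  shows "qEuler (qpow q) r n x = (1 + q) ^ r / (1 - q) ^ n *
           (\<Sum>l\<le>n. of_nat (n choose l) * (- qpow q x) ^ l / (1 + q ^ l) ^ r)"
  using qEuler_closed_form[of "qpow q" x r n] qpow_of_nat[of 1 q] assms
  by (simp add: qpow_add_of_nat)

lemma qEuler_qpow_dilated:
  assumes "norm q < 1" and "0 < f"
  shows "qEuler (\<lambda>y. qpow q (real f * y)) r n ((real a + x) / real f) = (1 + q ^ f) ^ r / (1 - q ^ f) ^ n *
           (\<Sum>l\<le>n. of_nat (n choose l) * (- qpow q x) ^ l * q ^ (l * a) / (1 + q ^ (l * f)) ^ r)"
proof -
  have shift: "qpow q (real f * (real m + z)) = (q ^ f) ^ m * qpow q (real f * z)" for m z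
  proof -
    have "qpow q (real f * (real m + z)) = qpow q (real (f * m) + real f * z)"
      by (simp add: algebra_simps)
    also have "\<dots> = (q ^ f) ^ m * qpow q (real f * z)"
      by (simp only: qpow_add_of_nat power_mult)
    finally show ?thesis .
  qed
  have base: "qpow q (real f * 1) = q ^ f"
    using qpow_of_nat[OF assms(2)] by simp
  have point: "qpow q (real f * ((real a + x) / real f)) = q ^ a * qpow q x"
    using assms(2) by (simp add: qpow_add_of_nat)
  have "norm (q ^ f) < 1"
    using assms by (simp add: norm_power power_less_one_iff)
  then have "qEuler (\<lambda>y. qpow q (real f * y)) r n ((real a + x) / real f) = (1 + q ^ f) ^ r / (1 - q ^ f) ^ n *
      (\<Sum>l\<le>n. of_nat (n choose l) * (- (q ^ a * qpow q x)) ^ l / (1 + (q ^ f) ^ l) ^ r)"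
    using qEuler_closed_form[where P = "\<lambda>y. qpow q (real f * y)" and x = "(real a + x) / real f",
        OF shift[folded base]]
    unfolding base point by blast
  moreover have "(- (q ^ a * w)) ^ l = (- w) ^ l * q ^ (l * a)" for w l
  proof -
    have "(- (q ^ a * w)) ^ l = (- w) ^ l * (q ^ a) ^ l"
      by (simp add: mult.commute flip: power_mult_distrib)
    then show ?thesis
      by (metis power_mult mult.commute)
  qed
  ultimately show ?thesis
    by (simp add: mult_ac flip: power_mult)
qed

lemma sum_alternating_lists_qpower:
  fixes q :: complex
  assumes "norm q < 1" and "odd f"
  shows "(\<Sum>as \<in> {as. length as = r \<and> set as \<subseteq> {..<f}}.
           (-1) ^ sum_list as * q ^ (l * sum_list as) / (1 + q ^ (l * f)) ^ r) = 1 / (1 + q ^ l) ^ r"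
proof -
  have "(-1) ^ k * q ^ (l * k) = (- (q ^ l)) ^ k" for k
    by (simp add: power_minus[of "q ^ l"] power_mult)
  moreover have "(q ^ l) ^ f = q ^ (l * f)"
    by (simp add: power_mult)
  moreover have "1 + q ^ (l * f) \<noteq> 0" and "1 + q ^ l \<noteq> 0"
    using assms(1) by (simp_all add: one_plus_power_neq_zero)
  ultimately show ?thesis
    using sum_alternating_power_sum_list_lists[OF assms(2), of "q ^ l" r]
    by (simp add: sum_divide_distrib[symmetric] power_divide)
qed

lemma sum_qEuler_qpow_dilated:
  assumes "norm q < 1" and "0 < f"
  shows "(\<Sum>as \<in> {as. length as = r \<and> set as \<subseteq> {..<f}}.
           (-1) ^ sum_list as * qEuler (\<lambda>y. qpow q (real f * y)) r n ((real (sum_list as) + x) / real f))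
       = (1 + q ^ f) ^ r / (1 - q ^ f) ^ n *
           (\<Sum>l = 0..n. of_nat (n choose l) * (- qpow q x) ^ l *
              (\<Sum>as \<in> {as. length as = r \<and> set as \<subseteq> {..<f}}.
                 (-1) ^ sum_list as * q ^ (l * sum_list as) / (1 + q ^ (l * f)) ^ r))"
  (is "?lhs = ?K * _")
proof -
  let ?L = "{as :: nat list. length as = r \<and> set as \<subseteq> {..<f}}"
  have "?lhs = ?K * (\<Sum>as\<in>?L. \<Sum>l\<le>n. of_nat (n choose l) * (- qpow q x) ^ l *
      ((-1) ^ sum_list as * q ^ (l * sum_list as) / (1 + q ^ (l * f)) ^ r))"
    unfolding qEuler_qpow_dilated[OF assms] sum_distrib_left
    by (intro sum.cong refl) (simp add: mult_ac)
  also have "\<dots> = ?K * (\<Sum>l\<le>n. of_nat (n choose l) * (- qpow q x) ^ l *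
      (\<Sum>as\<in>?L. (-1) ^ sum_list as * q ^ (l * sum_list as) / (1 + q ^ (l * f)) ^ r))"
    by (subst sum.swap) (simp add: sum_distrib_left)
  finally show ?thesis
    by (simp add: atLeast0AtMost)
qed

lemma qEuler_qpow_eq_alternating_sum:
  assumes "norm q < 1" and "odd f"
  shows "qEuler (qpow q) r n x = (1 + q) ^ r / (1 - q) ^ n *
           (\<Sum>l = 0..n. of_nat (n choose l) * (- qpow q x) ^ l *
              (\<Sum>as \<in> {as. length as = r \<and> set as \<subseteq> {..<f}}.
                 (-1) ^ sum_list as * q ^ (l * sum_list as) / (1 + q ^ (l * f)) ^ r))"
  by (simp add: qEuler_qpow[OF assms(1)] sum_alternating_lists_qpower[OF assms] atLeast0AtMost)

theorem theorem4:
  fixes q :: complex and r n f :: nat and x :: real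
  assumes "norm q < 1"
    and "r \<ge> 1"
    and "\<forall>k::nat. x \<noteq> - real k"
    and "odd f"
  shows "(qEuler (qpow q) r n x =
           ((1 + q) / (1 + q ^ f)) ^ r * ((1 - q ^ f) / (1 - q)) ^ n *
           (\<Sum>as \<in> {as :: nat list. length as = r \<and> set as \<subseteq> {..<f}}.
              (-1) ^ sum_list as *
              qEuler (\<lambda>y. qpow q (real f * y)) r n ((real (sum_list as) + x) / real f)))
         \<and> (qEuler (qpow q) r n x =
           (1 + q) ^ r / (1 - q) ^ n *
           (\<Sum>l = 0..n. of_nat (n choose l) * (- qpow q x) ^ l *
              (\<Sum>as \<in> {as :: nat list. length as = r \<and> set as \<subseteq> {..<f}}.
                 (-1) ^ sum_list as * q ^ (l * sum_list as) / (1 + q ^ (l * f)) ^ r)))"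
proof -
  note q = assms(1) and f_odd = assms(4)
  have f_pos: "0 < f"
    using f_odd by (cases f) auto
  have "norm (q ^ f) < 1"
    using q f_pos by (simp add: norm_power power_less_one_iff)
  then have "q ^ f \<noteq> 1" and "q \<noteq> 1" and "1 + q ^ f \<noteq> 0"
    using q one_plus_power_neq_zero[OF q, of f] by auto
  then have scaling: "((1 + q) / (1 + q ^ f)) ^ r * ((1 - q ^ f) / (1 - q)) ^ n *
      ((1 + q ^ f) ^ r / (1 - q ^ f) ^ n) = (1 + q) ^ r / (1 - q) ^ n"
    by (simp add: power_divide)
  then show ?thesis
    using qEuler_qpow_eq_alternating_sum[OF q f_odd, of r n x]
    by (simp add: sum_qEuler_qpow_dilated[OF q f_pos] mult.assoc flip: scaling)
qed

end
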